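(* Let $n>2$, $1<k<n$, $G=H_B(n,k)$. For $1\le i\le j\le n-1$ let $P_{i,j}$ be the number of unordered pairs $\{u,v\}$ with $u$ an $i$-vertex of $V_2$, $v$ a $j$-vertex of $V_2$, and $d(u,v)=4$. Then the number of unordered pairs of vertices of $V_2$ at distance $4$ is $$d^{(4)}_{V_2}=\sum_{\substack{1\le i\le j\le n-1\\ k+1\le i+j\le n+k-1}}P_{i,j},$$ where, with all sums over integers $t$ (representing $|u^\dagger\cap v^\dagger|$) satisfying $t\ge 0$, $i+j-n\le t<i+j-k$ and $t<\min\{i,k\}$: - if $i\ne k$, $j\ne k$, $i<j$: $P_{i,j}=\sum_t\binom{n}{i}2^{i-1}2^{j-1}\binom{n-i}{j-t}\binom{i}{t}$; - if $i=k<j$: $P_{i,j}=\sum_t\binom{n}{k}(2^{k-1}-1)2^{j-1}\binom{n-k}{j-t}\binom{k}{t}$; - if $i<j=k$: $P_{i,j}=\sum_t\binom{n}{i}2^{i-1}(2^{k-1}-1)\binom{n-i}{k-t}\binom{i}{t}$; - if $i=j=k$: $P_{i,j}=\frac12\sum_t\binom{n}{k}(2^{k-1}-1)^2\binom{n-k}{k-t}\binom{k}{t}$; - if $i=j\ne k$: $P_{i,j}=\frac12\sum_t\binom{n}{i}2^{2(i-1)}\binom{n-i}{i-t}\binom{i}{t}$.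
   Context: Fix integers $n\ge 2$ and $1\le k<n$ and positive real numbers $x_1<x_2<\dots<x_n$. Let $\mathscr{B}_n=\{\pm x_1,\pm x_2,\dots,\pm x_{n-1},x_n\}$ (so $-x_n\notin\mathscr{B}_n$). Let $\phi(\mathscr{B}_n)$ be the family of all nonempty subsets $S\subseteq\mathscr{B}_n$ whose elements have pairwise distinct absolute values and whose element of largest absolute value is positive. Let $\mathscr{B}_n^+=\{x_1,\dots,x_n\}$, let $V_1$ be the set of all $k$-element subsets of $\mathscr{B}_n^+$, and let $V_2=\phi(\mathscr{B}_n)\setminus V_1$. For $A\in\phi(\mathscr{B}_n)$ put $A^\dagger=\{|a|:a\in A\}$. The bipartite Kneser B type-$k$ graph $H_B(n,k)$ is the simple graph with vertex set $V_1\cup V_2$ in which $X\in V_1$ and $Y\in V_2$ are adjacent if and only if $X\subseteq Y^\dagger$ or $Y^\dagger\subseteq X$, and there are no other edges. An $r$-vertex is a vertex having exactly $r$ elements. $d(u,v)$ denotes graph distance. *)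

theory Defs
  imports Complex_Main
begin

definition Bn :: "(nat \<Rightarrow> real) \<Rightarrow> nat \<Rightarrow> real set" where
  "Bn x n = {x i | i. 1 \<le> i \<and> i \<le> n - 1} \<union> {- x i | i. 1 \<le> i \<and> i \<le> n - 1} \<union> {x n}"

definition phi :: "real set \<Rightarrow> real set set" where
  "phi B = {S. S \<noteq> {} \<and> S \<subseteq> B \<and> inj_on abs S \<and>
                (\<forall>a\<in>S. (\<forall>b\<in>S. \<bar>b\<bar> \<le> \<bar>a\<bar>) \<longrightarrow> a > 0)}"

definition Bplus :: "(nat \<Rightarrow> real) \<Rightarrow> nat \<Rightarrow> real set" where
  "Bplus x n = {x i | i. 1 \<le> i \<and> i \<le> n}"

definition V1 :: "(nat \<Rightarrow> real) \<Rightarrow> nat \<Rightarrow> nat \<Rightarrow> real set set" where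
  "V1 x n k = {X. X \<subseteq> Bplus x n \<and> card X = k}"

definition V2 :: "(nat \<Rightarrow> real) \<Rightarrow> nat \<Rightarrow> nat \<Rightarrow> real set set" where
  "V2 x n k = phi (Bn x n) - V1 x n k"

definition dagger :: "real set \<Rightarrow> real set" where
  "dagger A = abs ` A"

definition HB_verts :: "(nat \<Rightarrow> real) \<Rightarrow> nat \<Rightarrow> nat \<Rightarrow> real set set" where
  "HB_verts x n k = V1 x n k \<union> V2 x n k"

definition HB_adj :: "(nat \<Rightarrow> real) \<Rightarrow> nat \<Rightarrow> nat \<Rightarrow> real set \<Rightarrow> real set \<Rightarrow> bool" where
  "HB_adj x n k A B \<longleftrightarrow>
     (A \<in> V1 x n k \<and> B \<in> V2 x n k \<and> (A \<subseteq> dagger B \<or> dagger B \<subseteq> A)) \<or>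
     (B \<in> V1 x n k \<and> A \<in> V2 x n k \<and> (B \<subseteq> dagger A \<or> dagger A \<subseteq> B))"

definition has_walk :: "'a set \<Rightarrow> ('a \<Rightarrow> 'a \<Rightarrow> bool) \<Rightarrow> 'a \<Rightarrow> 'a \<Rightarrow> nat \<Rightarrow> bool" where
  "has_walk V E u v m \<longleftrightarrow>
     (\<exists>p::nat \<Rightarrow> 'a. p 0 = u \<and> p m = v \<and> (\<forall>i\<le>m. p i \<in> V) \<and> (\<forall>i<m. E (p i) (p (Suc i))))"

definition dist_is :: "'a set \<Rightarrow> ('a \<Rightarrow> 'a \<Rightarrow> bool) \<Rightarrow> 'a \<Rightarrow> 'a \<Rightarrow> nat \<Rightarrow> bool" where
  "dist_is V E u v m \<longleftrightarrow> has_walk V E u v m \<and> (\<forall>l<m. \<not> has_walk V E u v l)"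

definition HB_dist_is :: "(nat \<Rightarrow> real) \<Rightarrow> nat \<Rightarrow> nat \<Rightarrow> real set \<Rightarrow> real set \<Rightarrow> nat \<Rightarrow> bool" where
  "HB_dist_is x n k u v m = dist_is (HB_verts x n k) (HB_adj x n k) u v m"

definition Pcount :: "(nat \<Rightarrow> real) \<Rightarrow> nat \<Rightarrow> nat \<Rightarrow> nat \<Rightarrow> nat \<Rightarrow> nat" where
  "Pcount x n k i j = card {{u, v} | u v. u \<in> V2 x n k \<and> v \<in> V2 x n k \<and>
       card u = i \<and> card v = j \<and> HB_dist_is x n k u v 4}"

definition d4_V2 :: "(nat \<Rightarrow> real) \<Rightarrow> nat \<Rightarrow> nat \<Rightarrow> nat" where
  "d4_V2 x n k = card {{u, v} | u v. u \<in> V2 x n k \<and> v \<in> V2 x n k \<and> HB_dist_is x n k u v 4}"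

definition Tset :: "nat \<Rightarrow> nat \<Rightarrow> nat \<Rightarrow> nat \<Rightarrow> nat set" where
  "Tset n k i j = {t. int i + int j - int n \<le> int t \<and> int t < int i + int j - int k \<and> t < min i k}"

end

theory Submission
  imports Defs
begin

text \<open>A vertex \<open>u\<close> of \<open>V\<^sub>2\<close> is determined by \<open>u\<^sup>\<dagger> \<subseteq> B\<^sub>n\<^sup>+\<close> together with the signs of its
  elements other than \<open>max u\<^sup>\<dagger>\<close>, which must stay positive. Hence every \<open>j\<close>-subset of \<open>B\<^sub>n\<^sup>+\<close>
  carries \<open>2\<^sup>j\<^sup>-\<^sup>1\<close> vertices of \<open>V\<^sub>2\<close>, one fewer when \<open>j = k\<close> because the all-positive one lies in
  \<open>V\<^sub>1\<close>. The graph is bipartite and the vertex \<open>B\<^sub>n\<^sup>+\<close> of \<open>V\<^sub>2\<close> contains every vertex of \<open>V\<^sub>1\<close>, so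
  distinct vertices \<open>u, v\<close> of \<open>V\<^sub>2\<close> are at distance 2 or 4, and at distance 4 exactly when no
  \<open>k\<close>-subset of \<open>B\<^sub>n\<^sup>+\<close> is comparable with both \<open>u\<^sup>\<dagger>\<close> and \<open>v\<^sup>\<dagger>\<close>, i.e. when \<open>u\<^sup>\<dagger>\<close>, \<open>v\<^sup>\<dagger>\<close> are
  incomparable and \<open>|u\<^sup>\<dagger> \<inter> v\<^sup>\<dagger>| < k < |u\<^sup>\<dagger> \<union> v\<^sup>\<dagger>|\<close>. Counting ordered pairs according to
  \<open>t = |u\<^sup>\<dagger> \<inter> v\<^sup>\<dagger>|\<close> gives the binomial sums; pairs of vertices of equal size are counted twice.\<close>

lemma exists_card_between:
  assumes "finite S" "A \<subseteq> S" "card A \<le> m" "m \<le> card S"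
  shows "\<exists>X. A \<subseteq> X \<and> X \<subseteq> S \<and> card X = m"
proof -
  have fA: "finite A" using assms finite_subset by blast
  have "card (S - A) = card S - card A" using assms fA by (simp add: card_Diff_subset)
  then have mc: "m - card A \<le> card (S - A)" using assms by linarith
  obtain T where T: "T \<subseteq> S - A" "card T = m - card A" "finite T"
    using obtain_subset_with_card_n[OF mc] by blast
  have "card (A \<union> T) = card A + card T" using T fA by (subst card_Un_disjoint) auto
  then show ?thesis using T assms by (intro exI[of _ "A \<union> T"]) auto
qed

lemma ex_card_comparable_both_iff:
  assumes fS: "finite S" and AS: "A \<subseteq> S" and BS: "B \<subseteq> S" and mS: "m \<le> card S"
  shows "(\<exists>X. X \<subseteq> S \<and> card X = m \<and> (X \<subseteq> A \<or> A \<subseteq> X) \<and> (X \<subseteq> B \<or> B \<subseteq> X))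
     \<longleftrightarrow> \<not> (card (A \<inter> B) < m \<and> m < card (A \<union> B) \<and> \<not> A \<subseteq> B \<and> \<not> B \<subseteq> A)"
    (is "?ex \<longleftrightarrow> \<not> ?sep")
proof
  assume ?ex
  then obtain X where X: "X \<subseteq> S" "card X = m" "X \<subseteq> A \<or> A \<subseteq> X" "X \<subseteq> B \<or> B \<subseteq> X" by blast
  have fA: "finite A" and fX: "finite X" using AS X fS finite_subset by blast+
  from X(3,4) consider "X \<subseteq> A \<inter> B" | "A \<union> B \<subseteq> X" | "A \<subseteq> B \<or> B \<subseteq> A"
    by (meson Int_greatest Un_least order_trans)
  then show "\<not> ?sep"
  proof cases
    case 1 then show ?thesis using card_mono[OF _ 1] fA X(2) by auto
  next
    case 2 then show ?thesis using card_mono[OF fX 2] X(2) by auto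
  qed auto
next
  assume nsep: "\<not> ?sep"
  consider "m \<le> card (A \<inter> B)" | "card (A \<union> B) \<le> m"
    | "card (A \<inter> B) < m" "m < card (A \<union> B)" by linarith
  then show ?ex
  proof cases
    case 1
    then obtain X where "X \<subseteq> A \<inter> B" "card X = m" using obtain_subset_with_card_n[OF 1] by blast
    then show ?thesis using AS by blast
  next
    case 2
    then obtain X where "A \<union> B \<subseteq> X" "X \<subseteq> S" "card X = m"
      using exists_card_between[OF fS _ 2 mS] AS BS by blast
    then show ?thesis by blast
  next
    case 3
    have "finite (A \<union> B)" using AS BS fS finite_subset by blast
    then obtain X where X: "A \<inter> B \<subseteq> X" "X \<subseteq> A \<union> B" "card X = m"
      using exists_card_between[of "A \<union> B" "A \<inter> B" m] 3 by auto
    have "A \<subseteq> B \<or> B \<subseteq> A" using nsep 3 by simp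
    then show ?thesis
    proof
      assume "A \<subseteq> B"
      then have "A \<subseteq> X" "X \<subseteq> B" using X by auto
      then show ?thesis using X(3) BS by blast
    next
      assume "B \<subseteq> A"
      then have "B \<subseteq> X" "X \<subseteq> A" using X by auto
      then show ?thesis using X(3) AS by blast
    qed
  qed
qed

lemma card_subsets_with_card_inter:
  assumes fS: "finite S" and AS: "A \<subseteq> S" and tj: "t \<le> j"
  shows "card {B. B \<subseteq> S \<and> card B = j \<and> card (A \<inter> B) = t}
           = (card A choose t) * ((card S - card A) choose (j - t))"
proof -
  have fA: "finite A" using AS fS finite_subset by blast
  let ?D = "{C. C \<subseteq> A \<and> card C = t} \<times> {D. D \<subseteq> S - A \<and> card D = j - t}"
  have "bij_betw (\<lambda>(C, D). C \<union> D) ?D {B. B \<subseteq> S \<and> card B = j \<and> card (A \<inter> B) = t}"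
  proof (rule bij_betw_byWitness[where f' = "\<lambda>B. (A \<inter> B, B - A)"])
    show "(\<lambda>(C, D). C \<union> D) ` ?D \<subseteq> {B. B \<subseteq> S \<and> card B = j \<and> card (A \<inter> B) = t}"
    proof clarify
      fix C D assume C: "C \<subseteq> A" "t = card C" and D: "D \<subseteq> S - A" "card D = j - card C"
      have "finite C" "finite D" using C D fA fS finite_subset by blast+
      then have "card (C \<union> D) = card C + card D" using C D by (subst card_Un_disjoint) auto
      moreover have "A \<inter> (C \<union> D) = C" using C D by auto
      ultimately show "C \<union> D \<subseteq> S \<and> card (C \<union> D) = j \<and> card (A \<inter> (C \<union> D)) = card C"
        using C D AS tj by auto
    qed
    show "(\<lambda>B. (A \<inter> B, B - A)) ` {B. B \<subseteq> S \<and> card B = j \<and> card (A \<inter> B) = t} \<subseteq> ?D"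
    proof (rule image_subsetI)
      fix B assume B: "B \<in> {B. B \<subseteq> S \<and> card B = j \<and> card (A \<inter> B) = t}"
      then have "finite B" using fS finite_subset by blast
      then have "card (B - A) = j - t" using B by (simp add: card_Diff_subset_Int Int_commute)
      then show "(A \<inter> B, B - A) \<in> ?D" using B by auto
    qed
  qed auto
  then have "card {B. B \<subseteq> S \<and> card B = j \<and> card (A \<inter> B) = t} = card ?D"
    by (simp add: bij_betw_same_card)
  also have "\<dots> = (card A choose t) * ((card S - card A) choose (j - t))"
    using fA fS AS by (simp add: card_cartesian_product n_subsets card_Diff_subset)
  finally show ?thesis .
qed

lemma card_subsets_with_card_inter_in:
  assumes "finite S" "A \<subseteq> S" "finite T" "\<forall>t\<in>T. t \<le> j"
  shows "card {B. B \<subseteq> S \<and> card B = j \<and> card (A \<inter> B) \<in> T}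
           = (\<Sum>t\<in>T. (card A choose t) * ((card S - card A) choose (j - t)))"
proof -
  let ?F = "\<lambda>t. {B. B \<subseteq> S \<and> card B = j \<and> card (A \<inter> B) = t}"
  have "{B. B \<subseteq> S \<and> card B = j \<and> card (A \<inter> B) \<in> T} = (\<Union>t\<in>T. ?F t)" by blast
  also have "card \<dots> = (\<Sum>t\<in>T. card (?F t))"
    by (rule card_UN_disjoint) (use assms(1,3) in auto)
  also have "\<dots> = (\<Sum>t\<in>T. (card A choose t) * ((card S - card A) choose (j - t)))"
    using assms by (intro sum.cong refl card_subsets_with_card_inter) auto
  finally show ?thesis .
qed

lemma subset_iff_card_le_card_inter:
  assumes "finite A"
  shows "A \<subseteq> B \<longleftrightarrow> card A \<le> card (A \<inter> B)"
proof
  assume "card A \<le> card (A \<inter> B)"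
  then have "A \<inter> B = A" using card_seteq[OF assms, of "A \<inter> B"] by blast
  then show "A \<subseteq> B" by blast
qed (simp add: Int_absorb2)

lemma card_eq_mult_card_if_fibres_const:
  assumes "finite S" "finite I" "\<And>b. b \<in> I \<Longrightarrow> card {v \<in> S. f v = b} = c"
  shows "card {v \<in> S. f v \<in> I} = c * card I"
proof -
  have "{v \<in> S. f v \<in> I} = (\<Union>b\<in>I. {v \<in> S. f v = b})" by blast
  also have "card \<dots> = (\<Sum>b\<in>I. card {v \<in> S. f v = b})"
    by (rule card_UN_disjoint) (use assms(1,2) in auto)
  also have "\<dots> = c * card I" using assms(3) by simp
  finally show ?thesis .
qed

lemma card_doubletons_of_sym_irrefl:
  assumes "finite R" "sym R" "irrefl R"
  shows "2 * card ((\<lambda>(u, v). {u, v}) ` R) = card R"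
proof -
  let ?e = "\<lambda>(u, v). {u, v}"
  have "card {p \<in> R. ?e p \<in> ?e ` R} = 2 * card (?e ` R)"
  proof (rule card_eq_mult_card_if_fibres_const)
    fix e assume "e \<in> ?e ` R"
    then obtain u v where uv: "(u, v) \<in> R" "e = {u, v}" by auto
    have vu: "(v, u) \<in> R" using symD[OF assms(2) uv(1)] .
    have "u \<noteq> v" using uv(1) irreflD[OF assms(3)] by blast
    have "{p \<in> R. ?e p = e} = {(u, v), (v, u)}"
    proof (rule set_eqI)
      fix p :: "'a \<times> 'a"
      obtain a b where p: "p = (a, b)" by (cases p)
      have "{a, b} = {u, v} \<longleftrightarrow> (a, b) = (u, v) \<or> (a, b) = (v, u)"
        by (auto simp: doubleton_eq_iff)
      then show "p \<in> {p \<in> R. ?e p = e} \<longleftrightarrow> p \<in> {(u, v), (v, u)}"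
        using uv vu p by auto
    qed
    then show "card {p \<in> R. ?e p = e} = 2" using \<open>u \<noteq> v\<close> by simp
  qed (use assms(1) in auto)
  moreover have "{p \<in> R. ?e p \<in> ?e ` R} = R" by blast
  ultimately show ?thesis by simp
qed

section \<open>Signings of a set of positive reals\<close>

definition signing :: "real set \<Rightarrow> real set \<Rightarrow> real set" where
  "signing B N = (B - N) \<union> uminus ` N"

lemma
  assumes pos: "\<forall>b\<in>B. 0 < b" and NB: "N \<subseteq> B"
  shows dagger_signing: "dagger (signing B N) = B"
    and inj_on_abs_signing: "inj_on abs (signing B N)"
    and negatives_signing: "{a \<in> signing B N. a < 0} = uminus ` N"
proof -
  have sign_cases: "0 < a \<and> a \<in> B - N \<or> a < 0 \<and> - a \<in> N" if "a \<in> signing B N" for a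
    using that NB pos unfolding signing_def by auto
  have pos_mem: "b \<in> signing B N" if "b \<in> B - N" for b
    using that unfolding signing_def by auto
  have neg_mem: "- c \<in> signing B N" if "c \<in> N" for c
    using that unfolding signing_def by auto
  show "dagger (signing B N) = B"
  proof
    show "dagger (signing B N) \<subseteq> B" unfolding dagger_def using sign_cases NB by fastforce
    show "B \<subseteq> dagger (signing B N)"
    proof
      fix b assume b: "b \<in> B"
      then have abs_b: "\<bar>b\<bar> = b" "\<bar>- b\<bar> = b" using pos by auto
      show "b \<in> dagger (signing B N)"
      proof (cases "b \<in> N")
        case True
        then show ?thesis using abs_b(2) neg_mem[of b] unfolding dagger_def by (metis image_eqI)
      next
        case False
        then show ?thesis using abs_b(1) pos_mem[of b] b unfolding dagger_def by (metis DiffI image_eqI)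
      qed
    qed
  qed
  show "inj_on abs (signing B N)"
  proof (rule inj_onI)
    fix a b assume "a \<in> signing B N" "b \<in> signing B N" "\<bar>a\<bar> = \<bar>b\<bar>"
    then show "a = b" using sign_cases[of a] sign_cases[of b] by (auto simp: abs_of_pos abs_of_neg)
  qed
  show "{a \<in> signing B N. a < 0} = uminus ` N"
  proof
    show "{a \<in> signing B N. a < 0} \<subseteq> uminus ` N"
      using sign_cases by (force intro: image_eqI[where x = "- _"])
    show "uminus ` N \<subseteq> {a \<in> signing B N. a < 0}"
      using neg_mem NB pos by auto
  qed
qed

lemma eq_signing_negatives:
  assumes inj: "inj_on abs u" and "0 \<notin> u"
  shows "u = signing (dagger u) (uminus ` {a \<in> u. a < 0})"
proof -
  have pos_part: "{a \<in> u. 0 < a} = dagger u - uminus ` {a \<in> u. a < 0}"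
  proof
    show "{a \<in> u. 0 < a} \<subseteq> dagger u - uminus ` {a \<in> u. a < 0}"
    proof
      fix a assume a: "a \<in> {a \<in> u. 0 < a}"
      have "a \<noteq> - b" if "b \<in> u" "b < 0" for b
        using inj_onD[OF inj, of b a] that a by force
      then show "a \<in> dagger u - uminus ` {a \<in> u. a < 0}" using a unfolding dagger_def by force
    qed
    show "dagger u - uminus ` {a \<in> u. a < 0} \<subseteq> {a \<in> u. 0 < a}"
      using assms(2) unfolding dagger_def by (force simp: abs_if)
  qed
  have "a < 0 \<or> 0 < a" if "a \<in> u" for a using that assms(2) by (metis neq_iff)
  then have "u = {a \<in> u. 0 < a} \<union> {a \<in> u. a < 0}" by blast
  also have "{a \<in> u. a < 0} = uminus ` uminus ` {a \<in> u. a < 0}"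
    by (simp add: image_image)
  finally have "u = {a \<in> u. 0 < a} \<union> uminus ` uminus ` {a \<in> u. a < 0}" .
  then show ?thesis unfolding pos_part signing_def .
qed

section \<open>The vertices of \<open>H\<^sub>B(n, k)\<close>\<close>

locale kneser_B =
  fixes x :: "nat \<Rightarrow> real" and n k :: nat
  assumes n_gt_2: "n > 2" and k_gt_1: "1 < k" and k_lt_n: "k < n"
    and x_pos: "\<forall>i. 1 \<le> i \<and> i \<le> n \<longrightarrow> 0 < x i"
    and x_less: "\<forall>i j. 1 \<le> i \<and> i < j \<and> j \<le> n \<longrightarrow> x i < x j"
begin

abbreviation Bp :: "real set" where
  "Bp \<equiv> Bplus x n"

lemma strict_mono_on_x: "strict_mono_on {1..n} x"
  using x_less by (auto simp: strict_mono_on_def)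

lemma Bplus_eq_image: "Bp = x ` {1..n}"
  unfolding Bplus_def by auto

lemma finite_Bplus: "finite Bp"
  by (simp add: Bplus_eq_image)

lemma card_Bplus: "card Bp = n"
  using strict_mono_on_imp_inj_on[OF strict_mono_on_x] by (simp add: Bplus_eq_image card_image)

lemma Bplus_pos: "p \<in> Bp \<Longrightarrow> 0 < p"
  using x_pos by (auto simp: Bplus_eq_image)

lemma xn_in_Bplus: "x n \<in> Bp"
  using n_gt_2 by (simp add: Bplus_eq_image)

lemma Bplus_le_xn: "p \<in> Bp \<Longrightarrow> p \<le> x n"
  using strict_mono_on_leD[OF strict_mono_on_x] by (auto simp: Bplus_eq_image)

lemma Bn_eq: "Bn x n = Bp \<union> uminus ` (Bp - {x n})"
proof -
  have "x ` ({1..n} - {n}) = x ` {1..n} - x ` {n}"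
    by (rule inj_on_image_set_diff[OF strict_mono_on_imp_inj_on[OF strict_mono_on_x]])
      (use n_gt_2 in auto)
  moreover have "{1..n} - {n} = {1..n - 1}" using n_gt_2 by auto
  ultimately have "Bp - {x n} = x ` {1..n - 1}" by (simp add: Bplus_eq_image)
  moreover have "Bn x n = insert (x n) (x ` {1..n - 1}) \<union> uminus ` x ` {1..n - 1}"
    unfolding Bn_def by auto
  ultimately show ?thesis using xn_in_Bplus by auto
qed

lemma finite_Bn: "finite (Bn x n)"
  by (simp add: Bn_eq finite_Bplus)

lemma
  assumes "u \<in> phi (Bn x n)"
  shows dagger_subset_Bplus: "dagger u \<subseteq> Bp"
    and card_dagger: "card (dagger u) = card u"
proof -
  have "\<bar>p\<bar> = p" "\<bar>- p\<bar> = p" if "p \<in> Bp" for p using Bplus_pos[OF that] by auto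
  then have "abs ` Bn x n \<subseteq> Bp" unfolding Bn_eq by auto
  then show "dagger u \<subseteq> Bp" using assms unfolding phi_def dagger_def by auto
  show "card (dagger u) = card u" using assms unfolding phi_def dagger_def by (simp add: card_image)
qed

lemma finite_phi: "finite (phi (Bn x n))"
  by (rule finite_subset[of _ "Pow (Bn x n)"]) (auto simp: phi_def finite_Bn)

lemma phi_mem_signings:
  assumes u: "u \<in> phi (Bn x n)"
  defines "B \<equiv> dagger u"
  shows "u \<in> signing B ` Pow (B - {Max B})"
proof -
  have BP: "B \<subseteq> Bp" using u dagger_subset_Bplus unfolding B_def by blast
  have fin: "finite B" using BP finite_Bplus finite_subset by blast
  have pos: "\<forall>b\<in>B. 0 < b" using BP Bplus_pos by blast
  have max_in: "Max B \<in> B" using fin u unfolding B_def dagger_def phi_def by simp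
  have inj: "inj_on abs u" and "0 \<notin> u" using u pos unfolding phi_def B_def dagger_def by auto
  have "- Max B \<notin> u"
  proof
    assume "- Max B \<in> u"
    moreover have "\<bar>b\<bar> \<le> \<bar>- Max B\<bar>" if "b \<in> u" for b
    proof -
      have "\<bar>b\<bar> \<in> B" using that unfolding B_def dagger_def by blast
      then show ?thesis using Max_ge[OF fin] pos max_in by fastforce
    qed
    ultimately show False using u pos max_in unfolding phi_def by force
  qed
  have "uminus ` {a \<in> u. a < 0} \<subseteq> B - {Max B}"
  proof
    fix c assume "c \<in> uminus ` {a \<in> u. a < 0}"
    then obtain a where a: "a \<in> u" "a < 0" "c = - a" by blast
    then have "c = \<bar>a\<bar>" by simp
    then have "c \<in> B" using a(1) unfolding B_def dagger_def by blast
    moreover have "c \<noteq> Max B" using a \<open>- Max B \<notin> u\<close> by (metis minus_minus)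
    ultimately show "c \<in> B - {Max B}" by blast
  qed
  then show ?thesis using eq_signing_negatives[OF inj \<open>0 \<notin> u\<close>] unfolding B_def by blast
qed

lemma signing_in_phi:
  assumes BP: "B \<subseteq> Bp" and N: "N \<subseteq> B - {Max B}" and "B \<noteq> {}"
  shows "signing B N \<in> phi (Bn x n)"
proof -
  have fin: "finite B" using BP finite_Bplus finite_subset by blast
  have pos: "\<forall>b\<in>B. 0 < b" using BP Bplus_pos by blast
  have max_in: "Max B \<in> B" using fin assms(3) by simp
  have NB: "N \<subseteq> B" using N by blast
  have "Max B \<in> signing B N" using N max_in unfolding signing_def by blast
  have "signing B N \<subseteq> Bn x n"
  proof -
    have "q \<noteq> x n" if "q \<in> N" for q
    proof -
      have "q \<in> B" "q \<noteq> Max B" using that N by auto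
      moreover have "Max B \<le> x n" using BP max_in Bplus_le_xn by auto
      ultimately show ?thesis using Max_ge[OF fin, of q] by fastforce
    qed
    then have "N \<subseteq> Bp - {x n}" using NB BP by blast
    then show ?thesis unfolding signing_def Bn_eq using BP by (intro Un_mono image_mono) auto
  qed
  moreover have "0 < a" if a: "a \<in> signing B N" "\<forall>b\<in>signing B N. \<bar>b\<bar> \<le> \<bar>a\<bar>" for a
  proof (rule ccontr)
    assume "\<not> 0 < a"
    have abs_a: "\<bar>a\<bar> \<in> B" using a(1) dagger_signing[OF pos NB] unfolding dagger_def by blast
    have "\<bar>Max B\<bar> \<le> \<bar>a\<bar>" using a(2) \<open>Max B \<in> signing B N\<close> by blast
    then have "\<bar>a\<bar> = Max B" using Max_ge[OF fin abs_a] pos max_in by auto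
    then have "a < 0" using \<open>\<not> 0 < a\<close> pos max_in by auto
    then have "a \<in> uminus ` N" using a(1) negatives_signing[OF pos NB] by blast
    then have "Max B \<in> N" using \<open>\<bar>a\<bar> = Max B\<close> \<open>a < 0\<close> by auto
    then show False using N by blast
  qed
  ultimately show ?thesis
    using \<open>Max B \<in> signing B N\<close> inj_on_abs_signing[OF pos NB] unfolding phi_def by blast
qed

lemma phi_fibre_eq:
  assumes "B \<subseteq> Bp" "B \<noteq> {}"
  shows "{u \<in> phi (Bn x n). dagger u = B} = signing B ` Pow (B - {Max B})"
proof
  show "{u \<in> phi (Bn x n). dagger u = B} \<subseteq> signing B ` Pow (B - {Max B})"
    using phi_mem_signings by blast
  show "signing B ` Pow (B - {Max B}) \<subseteq> {u \<in> phi (Bn x n). dagger u = B}"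
  proof (rule image_subsetI)
    fix N assume "N \<in> Pow (B - {Max B})"
    then have N: "N \<subseteq> B - {Max B}" by blast
    then have "dagger (signing B N) = B" using assms(1) Bplus_pos by (intro dagger_signing) auto
    then show "signing B N \<in> {u \<in> phi (Bn x n). dagger u = B}"
      using signing_in_phi[OF assms(1) N assms(2)] by blast
  qed
qed

lemma card_phi_fibre:
  assumes BP: "B \<subseteq> Bp" and "B \<noteq> {}"
  shows "card {u \<in> phi (Bn x n). dagger u = B} = 2 ^ (card B - 1)"
proof -
  have fin: "finite B" using BP finite_Bplus finite_subset by blast
  have pos: "\<forall>b\<in>B. 0 < b" using BP Bplus_pos by blast
  have "inj_on (signing B) (Pow (B - {Max B}))"
  proof (rule inj_onI)
    fix N M assume "N \<in> Pow (B - {Max B})" "M \<in> Pow (B - {Max B})" "signing B N = signing B M"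
    then have "N \<subseteq> B" "M \<subseteq> B" "signing B N = signing B M" by auto
    then have "uminus ` N = uminus ` M" using negatives_signing[OF pos] by metis
    then show "N = M" by (simp add: inj_image_eq_iff)
  qed
  then have "card {u \<in> phi (Bn x n). dagger u = B} = card (Pow (B - {Max B}))"
    unfolding phi_fibre_eq[OF assms] by (rule card_image)
  also have "\<dots> = 2 ^ (card B - 1)" using fin assms(2) by (simp add: card_Pow)
  finally show ?thesis .
qed

lemma V2_subset_phi: "V2 x n k \<subseteq> phi (Bn x n)"
  by (simp add: V2_def)

lemma finite_V2: "finite (V2 x n k)"
  using finite_phi by (simp add: V2_def)

lemma
  assumes "u \<in> V2 x n k"
  shows dagger_V2_subset_Bplus: "dagger u \<subseteq> Bp"
    and card_dagger_V2: "card (dagger u) = card u"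
  using assms V2_subset_phi dagger_subset_Bplus card_dagger by blast+

lemma dagger_eq_self: "u \<subseteq> Bp \<Longrightarrow> dagger u = u"
  using Bplus_pos unfolding dagger_def by (force intro: image_eqI[where x = "_ :: real"])

text \<open>For \<open>j = k\<close> the all-positive signing of a \<open>k\<close>-subset of \<open>B\<^sub>n\<^sup>+\<close> lies in \<open>V\<^sub>1\<close>, not in \<open>V\<^sub>2\<close>.\<close>
definition signings_V2 :: "nat \<Rightarrow> nat" where
  "signings_V2 j = 2 ^ (j - 1) - (if j = k then 1 else 0)"

lemma card_V2_fibre:
  assumes BP: "B \<subseteq> Bp" and "B \<noteq> {}"
  shows "card {u \<in> V2 x n k. dagger u = B} = signings_V2 (card B)"
proof -
  let ?T = "{u \<in> phi (Bn x n). dagger u = B}"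
  have "B = signing B {}" by (simp add: signing_def)
  then have "B \<in> ?T" unfolding phi_fibre_eq[OF assms] by blast
  have V1_part: "?T \<inter> V1 x n k = (if card B = k then {B} else {})"
  proof -
    have "u \<in> ?T \<inter> V1 x n k \<longleftrightarrow> u = B \<and> card B = k" for u
    proof
      assume "u \<in> ?T \<inter> V1 x n k"
      then show "u = B \<and> card B = k" using dagger_eq_self[of u] unfolding V1_def by auto
    qed (use \<open>B \<in> ?T\<close> BP in \<open>auto simp: V1_def\<close>)
    then show ?thesis by auto
  qed
  have "{u \<in> V2 x n k. dagger u = B} = ?T - ?T \<inter> V1 x n k" unfolding V2_def by blast
  moreover have "finite ?T" using finite_phi by simp
  ultimately show ?thesis
    using V1_part \<open>B \<in> ?T\<close> card_phi_fibre[OF assms] by (simp add: signings_V2_def card_Diff_subset)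
qed

lemma card_V2_dagger_in:
  assumes I: "\<And>B. B \<in> I \<Longrightarrow> B \<subseteq> Bp \<and> card B = j" and "1 \<le> j"
  shows "card {v \<in> V2 x n k. dagger v \<in> I} = signings_V2 j * card I"
proof (rule card_eq_mult_card_if_fibres_const)
  show "finite (V2 x n k)" by (rule finite_V2)
  show "finite I" using I finite_Bplus by (meson PowI finite_Pow_iff finite_subset subsetI)
  fix B assume "B \<in> I"
  then show "card {v \<in> V2 x n k. dagger v = B} = signings_V2 j"
    using I[of B] \<open>1 \<le> j\<close> card_V2_fibre[of B] by fastforce
qed

section \<open>Distance four between vertices of \<open>V\<^sub>2\<close>\<close>

abbreviation walk :: "real set \<Rightarrow> real set \<Rightarrow> nat \<Rightarrow> bool" where
  "walk \<equiv> has_walk (HB_verts x n k) (HB_adj x n k)"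

lemma V2_not_V1: "u \<in> V2 x n k \<Longrightarrow> u \<notin> V1 x n k"
  unfolding V2_def by blast

lemma HB_adj_from_V2:
  "HB_adj x n k u X \<Longrightarrow> u \<in> V2 x n k \<Longrightarrow> X \<in> V1 x n k \<and> (X \<subseteq> dagger u \<or> dagger u \<subseteq> X)"
  unfolding HB_adj_def using V2_not_V1 by blast

lemma HB_adj_from_V1:
  "HB_adj x n k X v \<Longrightarrow> X \<in> V1 x n k \<Longrightarrow> v \<in> V2 x n k \<and> (X \<subseteq> dagger v \<or> dagger v \<subseteq> X)"
  unfolding HB_adj_def using V2_not_V1 by blast

lemma walk_alternates:
  assumes "p 0 \<in> V2 x n k" "\<forall>i<m. HB_adj x n k (p i) (p (Suc i))" "i \<le> m"
  shows "p i \<in> (if even i then V2 x n k else V1 x n k)"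
  using assms(3)
proof (induction i)
  case (Suc i)
  then have "HB_adj x n k (p i) (p (Suc i))" using assms(2) by simp
  then show ?case using Suc HB_adj_from_V2 HB_adj_from_V1 by (simp split: if_splits)
qed (use assms(1) in simp)

lemma no_odd_walk:
  assumes "u \<in> V2 x n k" "v \<in> V2 x n k" "odd m"
  shows "\<not> walk u v m"
proof
  assume "walk u v m"
  then obtain p where "p 0 = u" "p m = v" "\<forall>i<m. HB_adj x n k (p i) (p (Suc i))"
    unfolding has_walk_def by blast
  then have "v \<in> V1 x n k" using walk_alternates[of p m m] assms by simp
  then show False using assms V2_not_V1 by blast
qed

lemma walk_2_iff:
  assumes u: "u \<in> V2 x n k" and v: "v \<in> V2 x n k"
  shows "walk u v 2 \<longleftrightarrow>
    (\<exists>X\<in>V1 x n k. (X \<subseteq> dagger u \<or> dagger u \<subseteq> X) \<and> (X \<subseteq> dagger v \<or> dagger v \<subseteq> X))"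
proof
  assume "walk u v 2"
  then obtain p where p: "p 0 = u" "p 2 = v" "\<forall>i<2. HB_adj x n k (p i) (p (Suc i))"
    unfolding has_walk_def by blast
  then have "HB_adj x n k u (p 1)" "HB_adj x n k (p 1) v" by (auto simp: numeral_2_eq_2)
  then have "p 1 \<in> V1 x n k" "p 1 \<subseteq> dagger u \<or> dagger u \<subseteq> p 1" "p 1 \<subseteq> dagger v \<or> dagger v \<subseteq> p 1"
    using HB_adj_from_V2[OF _ u] HB_adj_from_V1 by blast+
  then show "\<exists>X\<in>V1 x n k. (X \<subseteq> dagger u \<or> dagger u \<subseteq> X) \<and> (X \<subseteq> dagger v \<or> dagger v \<subseteq> X)"
    by blast
next
  assume "\<exists>X\<in>V1 x n k. (X \<subseteq> dagger u \<or> dagger u \<subseteq> X) \<and> (X \<subseteq> dagger v \<or> dagger v \<subseteq> X)"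
  then obtain X where X: "X \<in> V1 x n k" "X \<subseteq> dagger u \<or> dagger u \<subseteq> X" "X \<subseteq> dagger v \<or> dagger v \<subseteq> X"
    by blast
  let ?p = "\<lambda>i::nat. if i = 0 then u else if i = 1 then X else v"
  have "\<forall>i<2. HB_adj x n k (?p i) (?p (Suc i))"
  proof (intro allI impI)
    fix i :: nat assume "i < 2"
    then consider "i = 0" | "i = 1" by linarith
    then show "HB_adj x n k (?p i) (?p (Suc i))" by cases (use X u v in \<open>auto simp: HB_adj_def\<close>)
  qed
  moreover have "\<forall>i\<le>2. ?p i \<in> HB_verts x n k" using X u v by (simp add: HB_verts_def)
  ultimately show "walk u v 2" unfolding has_walk_def by (intro exI[of _ ?p]) auto
qed

lemma exists_V1_neighbour:
  assumes u: "u \<in> V2 x n k"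
  shows "\<exists>X\<in>V1 x n k. X \<subseteq> dagger u \<or> dagger u \<subseteq> X"
proof -
  have uP: "dagger u \<subseteq> Bp" using u by (rule dagger_V2_subset_Bplus)
  have "\<exists>X. X \<subseteq> Bp \<and> card X = k \<and> (X \<subseteq> dagger u \<or> dagger u \<subseteq> X) \<and> (X \<subseteq> Bp \<or> Bp \<subseteq> X)"
    using uP card_Bplus k_lt_n
    by (subst ex_card_comparable_both_iff[OF finite_Bplus uP subset_refl]) simp_all
  then show ?thesis unfolding V1_def by blast
qed

lemma Bplus_in_V2: "Bp \<in> V2 x n k"
proof -
  have "Bp \<noteq> {}" using xn_in_Bplus by blast
  then have "signing Bp {} \<in> phi (Bn x n)" using phi_fibre_eq[of Bp] by blast
  then show ?thesis using card_Bplus k_lt_n unfolding V2_def V1_def signing_def by auto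
qed

text \<open>The walk is \<open>u, X, B\<^sub>n\<^sup>+, Y, v\<close>: the vertex \<open>B\<^sub>n\<^sup>+\<close> of \<open>V\<^sub>2\<close> contains every vertex
  of \<open>V\<^sub>1\<close>.\<close>
lemma walk_4:
  assumes u: "u \<in> V2 x n k" and v: "v \<in> V2 x n k"
  shows "walk u v 4"
proof -
  obtain X Y where X: "X \<in> V1 x n k" "X \<subseteq> dagger u \<or> dagger u \<subseteq> X"
    and Y: "Y \<in> V1 x n k" "Y \<subseteq> dagger v \<or> dagger v \<subseteq> Y"
    using exists_V1_neighbour[OF u] exists_V1_neighbour[OF v] by blast
  have "X \<subseteq> dagger Bp" "Y \<subseteq> dagger Bp" using X Y dagger_eq_self[of Bp] unfolding V1_def by auto
  let ?p = "\<lambda>i::nat. if i = 0 then u else if i = 1 then X else if i = 2 then Bp else if i = 3 then Y else v"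
  have "\<forall>i<4. HB_adj x n k (?p i) (?p (Suc i))"
  proof (intro allI impI)
    fix i :: nat assume "i < 4"
    then consider "i = 0" | "i = 1" | "i = 2" | "i = 3" by linarith
    then show "HB_adj x n k (?p i) (?p (Suc i))"
      by cases (use X Y u v Bplus_in_V2 \<open>X \<subseteq> dagger Bp\<close> \<open>Y \<subseteq> dagger Bp\<close> in \<open>auto simp: HB_adj_def\<close>)
  qed
  moreover have "\<forall>i\<le>4. ?p i \<in> HB_verts x n k" using X Y u v Bplus_in_V2 by (simp add: HB_verts_def)
  ultimately show "walk u v 4" unfolding has_walk_def by (intro exI[of _ ?p]) auto
qed

definition separated :: "real set \<Rightarrow> real set \<Rightarrow> bool" where
  "separated A B \<longleftrightarrow> card (A \<inter> B) < k \<and> k < card (A \<union> B) \<and> \<not> A \<subseteq> B \<and> \<not> B \<subseteq> A"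

lemma HB_dist_4_iff:
  assumes u: "u \<in> V2 x n k" and v: "v \<in> V2 x n k"
  shows "HB_dist_is x n k u v 4 \<longleftrightarrow> separated (dagger u) (dagger v)"
proof -
  have uP: "dagger u \<subseteq> Bp" and vP: "dagger v \<subseteq> Bp"
    using u v by (simp_all add: dagger_V2_subset_Bplus)
  have "\<not> walk u v 1" "\<not> walk u v 3" using no_odd_walk[OF u v] by auto
  then have "(\<forall>l<4. \<not> walk u v l) \<longleftrightarrow> \<not> walk u v 0 \<and> \<not> walk u v 2"
    by (auto simp: less_Suc_eq numeral_eq_Suc)
  also have "walk u v 0 \<longleftrightarrow> u = v" using u by (auto simp: has_walk_def HB_verts_def)
  also have "walk u v 2 \<longleftrightarrow> \<not> separated (dagger u) (dagger v)"
  proof -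
    have "walk u v 2 \<longleftrightarrow> (\<exists>X. X \<subseteq> Bp \<and> card X = k \<and>
        (X \<subseteq> dagger u \<or> dagger u \<subseteq> X) \<and> (X \<subseteq> dagger v \<or> dagger v \<subseteq> X))"
      unfolding walk_2_iff[OF u v] V1_def by blast
    also have "\<dots> \<longleftrightarrow> \<not> separated (dagger u) (dagger v)"
      unfolding separated_def using card_Bplus k_lt_n
      by (intro ex_card_comparable_both_iff[OF finite_Bplus uP vP]) simp
    finally show ?thesis .
  qed
  finally have "(\<forall>l<4. \<not> walk u v l) \<longleftrightarrow> u \<noteq> v \<and> separated (dagger u) (dagger v)" by simp
  moreover have "separated (dagger u) (dagger v) \<Longrightarrow> u \<noteq> v" by (auto simp: separated_def)
  ultimately show ?thesis using walk_4[OF u v] unfolding HB_dist_is_def dist_is_def by blast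
qed

lemma separated_commute: "separated A B \<longleftrightarrow> separated B A"
  unfolding separated_def by (auto simp: Int_commute Un_commute)

lemma HB_dist_4_commute:
  "u \<in> V2 x n k \<Longrightarrow> v \<in> V2 x n k \<Longrightarrow> HB_dist_is x n k u v 4 \<longleftrightarrow> HB_dist_is x n k v u 4"
  using HB_dist_4_iff separated_commute by metis

section \<open>Counting pairs at distance four\<close>

lemma finite_Tset: "finite (Tset n k i j)"
  by (rule finite_subset[of _ "{..<i}"]) (auto simp: Tset_def)

lemma separated_iff_card_inter_in_Tset:
  assumes AP: "A \<subseteq> Bp" and BP: "B \<subseteq> Bp" and "card A = i" "card B = j" "i \<le> j"
  shows "separated A B \<longleftrightarrow> card (A \<inter> B) \<in> Tset n k i j"
proof -
  have fin: "finite A" "finite B" using AP BP finite_Bplus finite_subset by blast+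
  have "card (A \<union> B) + card (A \<inter> B) = i + j" using card_Un_Int[OF fin] assms by simp
  moreover have "card (A \<union> B) \<le> n" using card_mono[OF finite_Bplus] AP BP card_Bplus by force
  moreover have "card (A \<inter> B) \<le> card B" using fin by (simp add: card_mono)
  moreover have "separated A B \<longleftrightarrow> card (A \<inter> B) < k \<and> k < card (A \<union> B) \<and>
      card (A \<inter> B) < i \<and> card (A \<inter> B) < j"
    using subset_iff_card_le_card_inter[OF fin(1), of B] subset_iff_card_le_card_inter[OF fin(2), of A]
      assms(3,4) by (auto simp: separated_def Int_commute)
  ultimately show ?thesis using assms(5) by (auto simp: Tset_def)
qed

lemma separated_card_bounds:
  assumes AP: "A \<subseteq> Bp" and BP: "B \<subseteq> Bp" and "separated A B" and "card A \<le> card B"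
  shows "1 \<le> card A \<and> card B \<le> n - 1 \<and> k + 1 \<le> card A + card B \<and> card A + card B \<le> n + k - 1"
proof -
  have fin: "finite A" "finite B" using AP BP finite_Bplus finite_subset by blast+
  have sep: "card (A \<inter> B) < k" "k < card (A \<union> B)" "\<not> A \<subseteq> B"
    using assms(3) unfolding separated_def by auto
  have "card (A \<union> B) + card (A \<inter> B) = card A + card B" using card_Un_Int[OF fin] by simp
  moreover have "card (A \<union> B) \<le> n" using card_mono[OF finite_Bplus] AP BP card_Bplus by force
  moreover have "0 < card A" using sep(3) fin(1) card_gt_0_iff by blast
  moreover have "B \<subset> Bp" using sep(3) AP BP by blast
  then have "card B < n" using psubset_card_mono[OF finite_Bplus] card_Bplus by simp
  ultimately show ?thesis using sep(1,2) by linarith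
qed

definition dist4_ordered :: "nat \<Rightarrow> nat \<Rightarrow> (real set \<times> real set) set" where
  "dist4_ordered i j = {(u, v). u \<in> V2 x n k \<and> v \<in> V2 x n k \<and> card u = i \<and> card v = j \<and>
     HB_dist_is x n k u v 4}"

lemma finite_dist4_ordered: "finite (dist4_ordered i j)"
  by (rule finite_subset[of _ "V2 x n k \<times> V2 x n k"]) (auto simp: dist4_ordered_def finite_V2)

lemma dist4_ordered_eq_Sigma:
  assumes "i \<le> j"
  shows "dist4_ordered i j =
    (SIGMA u:{u \<in> V2 x n k. dagger u \<in> {A. A \<subseteq> Bp \<and> card A = i}}.
       {v \<in> V2 x n k. dagger v \<in> {B. B \<subseteq> Bp \<and> card B = j \<and> card (dagger u \<inter> B) \<in> Tset n k i j}})"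
    (is "_ = Sigma ?W ?G")
proof -
  have "p \<in> dist4_ordered i j \<longleftrightarrow> p \<in> Sigma ?W ?G" for p
  proof -
    obtain u v where p: "p = (u, v)" by (cases p)
    show ?thesis
    proof (cases "u \<in> V2 x n k \<and> v \<in> V2 x n k")
      case True
      then have "dagger u \<subseteq> Bp" "dagger v \<subseteq> Bp" "card (dagger u) = card u" "card (dagger v) = card v"
        using dagger_V2_subset_Bplus card_dagger_V2 by auto
      then show ?thesis
        using True p HB_dist_4_iff separated_iff_card_inter_in_Tset[OF _ _ _ _ assms]
        unfolding dist4_ordered_def by auto
    qed (use p in \<open>auto simp: dist4_ordered_def\<close>)
  qed
  then show ?thesis by blast
qed

lemma card_dist4_ordered:
  assumes "1 \<le> i" "i \<le> j"
  shows "card (dist4_ordered i j) = signings_V2 i * (n choose i) *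
           (signings_V2 j * (\<Sum>t\<in>Tset n k i j. (i choose t) * ((n - i) choose (j - t))))"
proof -
  let ?S = "\<Sum>t\<in>Tset n k i j. (i choose t) * ((n - i) choose (j - t))"
  let ?W = "{u \<in> V2 x n k. dagger u \<in> {A. A \<subseteq> Bp \<and> card A = i}}"
  let ?G = "\<lambda>u. {v \<in> V2 x n k. dagger v \<in> {B. B \<subseteq> Bp \<and> card B = j \<and> card (dagger u \<inter> B) \<in> Tset n k i j}}"
  have "card (dist4_ordered i j) = (\<Sum>u\<in>?W. card (?G u))"
    using finite_V2 by (simp add: dist4_ordered_eq_Sigma[OF assms(2)] card_SigmaI)
  also have "\<dots> = (\<Sum>u\<in>?W. signings_V2 j * ?S)"
  proof (rule sum.cong[OF refl])
    fix u assume "u \<in> ?W"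
    then have uP: "dagger u \<subseteq> Bp" and cu: "card (dagger u) = i" by auto
    have "\<forall>t\<in>Tset n k i j. t \<le> j" using assms(2) by (auto simp: Tset_def)
    then have "card {B. B \<subseteq> Bp \<and> card B = j \<and> card (dagger u \<inter> B) \<in> Tset n k i j} = ?S"
      using card_subsets_with_card_inter_in[OF finite_Bplus uP finite_Tset] card_Bplus cu by simp
    moreover have "card (?G u) = signings_V2 j *
        card {B. B \<subseteq> Bp \<and> card B = j \<and> card (dagger u \<inter> B) \<in> Tset n k i j}"
      by (rule card_V2_dagger_in) (use assms in auto)
    ultimately show "card (?G u) = signings_V2 j * ?S" by simp
  qed
  also have "\<dots> = card ?W * (signings_V2 j * ?S)" by simp
  also have "card ?W = signings_V2 i * card {A. A \<subseteq> Bp \<and> card A = i}"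
    by (rule card_V2_dagger_in) (use assms in auto)
  also have "card {A. A \<subseteq> Bp \<and> card A = i} = n choose i"
    using n_subsets[OF finite_Bplus] card_Bplus by simp
  finally show ?thesis by simp
qed

lemma Pcount_eq_card_doubletons:
  "Pcount x n k i j = card ((\<lambda>(u, v). {u, v}) ` dist4_ordered i j)"
  unfolding Pcount_def dist4_ordered_def by (rule arg_cong[where f = card]) auto

lemma Pcount_less:
  assumes "i < j"
  shows "Pcount x n k i j = card (dist4_ordered i j)"
proof -
  have "inj_on (\<lambda>(u, v). {u, v}) (dist4_ordered i j)"
  proof (rule inj_onI, clarify)
    fix u v u' v' assume uv: "(u, v) \<in> dist4_ordered i j" "(u', v') \<in> dist4_ordered i j"
      and "{u, v} = {u', v'}"
    then have "u = u' \<and> v = v' \<or> u = v' \<and> v = u'" by (simp add: doubleton_eq_iff)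
    moreover have "card u = i" "card v' = j" using uv unfolding dist4_ordered_def by auto
    ultimately show "u = u' \<and> v = v'" using assms by auto
  qed
  then show ?thesis unfolding Pcount_eq_card_doubletons by (rule card_image)
qed

lemma Pcount_diagonal: "2 * Pcount x n k i i = card (dist4_ordered i i)"
proof -
  have "sym (dist4_ordered i i)"
    using HB_dist_4_commute by (auto simp: dist4_ordered_def intro: symI)
  moreover have "irrefl (dist4_ordered i i)"
    using HB_dist_4_iff by (auto simp: dist4_ordered_def separated_def irrefl_def)
  ultimately show ?thesis
    unfolding Pcount_eq_card_doubletons by (intro card_doubletons_of_sym_irrefl finite_dist4_ordered)
qed

lemma real_signings_V2:
  "real (signings_V2 j) = (if j = k then 2 ^ (j - 1) - 1 else 2 ^ (j - 1))"
  using one_le_power[of "2::nat" "j - 1"] by (simp add: signings_V2_def of_nat_diff)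

lemma real_Pcount:
  assumes "1 \<le> i" "i \<le> j"
  shows "real (Pcount x n k i j) = (if i = j then 1 / 2 else 1) *
    (\<Sum>t\<in>Tset n k i j. real (n choose i) * real (signings_V2 i) * real (signings_V2 j) *
       real ((n - i) choose (j - t)) * real (i choose t))"
proof -
  have "real (card (dist4_ordered i j)) =
      (\<Sum>t\<in>Tset n k i j. real (n choose i) * real (signings_V2 i) * real (signings_V2 j) *
         real ((n - i) choose (j - t)) * real (i choose t))"
    using card_dist4_ordered[OF assms] by (simp add: sum_distrib_left mult_ac)
  then show ?thesis
    using Pcount_less[of i j] Pcount_diagonal[of i] assms(2)
    by (cases "i = j") (simp_all add: field_simps)
qed

definition admissible_sizes :: "(nat \<times> nat) set" where
  "admissible_sizes = {(i, j). 1 \<le> i \<and> i \<le> j \<and> j \<le> n - 1 \<and> k + 1 \<le> i + j \<and> i + j \<le> n + k - 1}"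

lemma dist4_doubletons_eq_UN:
  "{{u, v} | u v. u \<in> V2 x n k \<and> v \<in> V2 x n k \<and> HB_dist_is x n k u v 4}
     = (\<Union>(i, j)\<in>admissible_sizes. (\<lambda>(u, v). {u, v}) ` dist4_ordered i j)"
    (is "?E = ?U")
proof
  have mem_U: "{u, v} \<in> ?U"
    if "u \<in> V2 x n k" "v \<in> V2 x n k" "HB_dist_is x n k u v 4" "card u \<le> card v" for u v
  proof -
    have "separated (dagger u) (dagger v)" using that HB_dist_4_iff by blast
    then have "(card u, card v) \<in> admissible_sizes"
      using that separated_card_bounds[OF dagger_V2_subset_Bplus dagger_V2_subset_Bplus]
      by (simp add: card_dagger_V2 admissible_sizes_def)
    moreover have "(u, v) \<in> dist4_ordered (card u) (card v)" using that by (simp add: dist4_ordered_def)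
    ultimately show ?thesis by force
  qed
  show "?E \<subseteq> ?U"
  proof
    fix e assume "e \<in> ?E"
    then obtain u v where uv: "e = {u, v}" "u \<in> V2 x n k" "v \<in> V2 x n k" "HB_dist_is x n k u v 4"
      by blast
    show "e \<in> ?U"
    proof (cases "card u \<le> card v")
      case True
      then show ?thesis using uv mem_U by blast
    next
      case False
      have "e = {v, u}" "HB_dist_is x n k v u 4" using uv HB_dist_4_commute by auto
      then show ?thesis using False uv mem_U[of v u] by simp
    qed
  qed
  show "?U \<subseteq> ?E" unfolding dist4_ordered_def by auto
qed

lemma doubletons_dist4_ordered_disjoint:
  assumes "i \<le> j" "i' \<le> j'" "(i, j) \<noteq> (i', j')"
  shows "(\<lambda>(u, v). {u, v}) ` dist4_ordered i j \<inter> (\<lambda>(u, v). {u, v}) ` dist4_ordered i' j' = {}"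
proof -
  have cards: "card ` e = {i, j}" if "e \<in> (\<lambda>(u, v). {u, v}) ` dist4_ordered i j" for e i j
    using that unfolding dist4_ordered_def by auto
  have "{i, j} \<noteq> {i', j'}" using assms by (auto simp: doubleton_eq_iff)
  then show ?thesis unfolding disjoint_iff using cards by metis
qed

lemma d4_V2_eq_sum_Pcount: "d4_V2 x n k = (\<Sum>(i, j)\<in>admissible_sizes. Pcount x n k i j)"
proof -
  have "finite admissible_sizes"
    by (rule finite_subset[of _ "{..n} \<times> {..n}"]) (auto simp: admissible_sizes_def)
  moreover have "\<forall>p\<in>admissible_sizes. \<forall>q\<in>admissible_sizes. p \<noteq> q \<longrightarrow>
      (case p of (i, j) \<Rightarrow> (\<lambda>(u, v). {u, v}) ` dist4_ordered i j) \<inter>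
      (case q of (i, j) \<Rightarrow> (\<lambda>(u, v). {u, v}) ` dist4_ordered i j) = {}"
    using doubletons_dist4_ordered_disjoint by (auto simp: admissible_sizes_def)
  ultimately show ?thesis
    unfolding d4_V2_def dist4_doubletons_eq_UN
    by (subst card_UN_disjoint) (auto simp: finite_dist4_ordered Pcount_eq_card_doubletons intro: sum.cong)
qed

end

theorem mainTheorem16:
  fixes x :: "nat \<Rightarrow> real" and n k :: nat
  assumes "n > 2" and "1 < k" and "k < n"
    and "\<forall>i. 1 \<le> i \<and> i \<le> n \<longrightarrow> 0 < x i"
    and "\<forall>i j. 1 \<le> i \<and> i < j \<and> j \<le> n \<longrightarrow> x i < x j"
  shows "d4_V2 x n k =
           (\<Sum>(i, j) \<in> {(i, j). 1 \<le> i \<and> i \<le> j \<and> j \<le> n - 1 \<and> k + 1 \<le> i + j \<and> i + j \<le> n + k - 1}.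
              Pcount x n k i j)
    \<and> (\<forall>i j. 1 \<le> i \<and> i \<le> j \<and> j \<le> n - 1 \<and> k + 1 \<le> i + j \<and> i + j \<le> n + k - 1 \<longrightarrow>
         (i \<noteq> k \<and> j \<noteq> k \<and> i < j \<longrightarrow>
            real (Pcount x n k i j) = (\<Sum>t\<in>Tset n k i j.
               real (n choose i) * 2 ^ (i - 1) * 2 ^ (j - 1) * real ((n - i) choose (j - t)) * real (i choose t)))
       \<and> (i = k \<and> k < j \<longrightarrow>
            real (Pcount x n k i j) = (\<Sum>t\<in>Tset n k i j.
               real (n choose k) * (2 ^ (k - 1) - 1) * 2 ^ (j - 1) * real ((n - k) choose (j - t)) * real (k choose t)))
       \<and> (i < j \<and> j = k \<longrightarrow>
            real (Pcount x n k i j) = (\<Sum>t\<in>Tset n k i j.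
               real (n choose i) * 2 ^ (i - 1) * (2 ^ (k - 1) - 1) * real ((n - i) choose (k - t)) * real (i choose t)))
       \<and> (i = k \<and> j = k \<longrightarrow>
            real (Pcount x n k i j) = (1 / 2) * (\<Sum>t\<in>Tset n k i j.
               real (n choose k) * (2 ^ (k - 1) - 1) ^ 2 * real ((n - k) choose (k - t)) * real (k choose t)))
       \<and> (i = j \<and> i \<noteq> k \<longrightarrow>
            real (Pcount x n k i j) = (1 / 2) * (\<Sum>t\<in>Tset n k i j.
               real (n choose i) * 2 ^ (2 * (i - 1)) * real ((n - i) choose (i - t)) * real (i choose t))))"
proof -
  interpret kneser_B x n k using assms by unfold_locales
  show ?thesis
    using d4_V2_eq_sum_Pcount real_Pcount unfolding admissible_sizes_def
    by (auto simp: real_signings_V2 power_even_eq power2_eq_square mult.assoc)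
qed

end
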